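(* Let $G=(V,E)$ and $H=(U,F)$ be finite simple graphs. If $G$ and $H$ are isomorphic, then the uniqueness tree algorithm (described in the context) applied to $G$ and $H$ outputs "$G\cong H$".
   Context: A simple graph is a finite, unweighted, undirected graph with no loops or multiple edges. $G\cong H$ means there is a bijection $f:V\to U$ such that for all $u,v\in V$, $f(u)f(v)\in F$ if and only if $uv\in E$. Let $n$ denote the number of vertices. The uniqueness tree algorithm consists of two stages. Tree generation: for each graph and each vertex $v$ of it, build a rooted tree $T(v)$ whose nodes are labelled by vertices of the graph, level by level. Level $0$ consists of the root, labelled $v$. A node on the current level is unique if its label occurs exactly once among the labels on that level. Each non-unique node becomes a leaf; each unique node labelled $u$ receives one child labelled $w$ for each neighbour $w$ of $u$ in the graph; these children form the next level. This is repeated while some node on the current level is unique and the height of $T(v)$ is less than $n$. Tree comparison: initially no vertex is mapped. For each unmapped $v\in V$ and, in turn, each unmapped $u\in U$, declare $v$ and $u$ equivalent unless one of the following holds: the heights of $T(v)$ and $T(u)$ differ; for some level, the numbers of nodes on that level of $T(v)$ and $T(u)$ differ; for some level and some $i\in\{1,\dots,n-1\}$, the number of nodes on that level having exactly $i$ children differs between $T(v)$ and $T(u)$. If $v$ and $u$ are equivalent, mark both as mapped. At the end, output "$G\cong H$" if all vertices of $V$ and $U$ have been mapped, and "$G\not\cong H$" otherwise. *)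

theory Defs
  imports Main "HOL-Library.Multiset"
begin

definition simple_graph :: "'a set \<Rightarrow> ('a \<Rightarrow> 'a \<Rightarrow> bool) \<Rightarrow> bool" where
  "simple_graph V E \<longleftrightarrow> finite V \<and> (\<forall>u w. E u w \<longrightarrow> u \<in> V \<and> w \<in> V)
     \<and> (\<forall>u w. E u w \<longrightarrow> E w u) \<and> (\<forall>u. \<not> E u u)"

definition graph_iso :: "'a set \<Rightarrow> ('a \<Rightarrow> 'a \<Rightarrow> bool) \<Rightarrow> 'b set \<Rightarrow> ('b \<Rightarrow> 'b \<Rightarrow> bool) \<Rightarrow> bool" where
  "graph_iso V E U F \<longleftrightarrow> (\<exists>f. bij_betw f V U \<and> (\<forall>u\<in>V. \<forall>w\<in>V. F (f u) (f w) \<longleftrightarrow> E u w))"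

text \<open>Levels of the uniqueness tree T(v), as multisets of labels.  A node is unique
  iff its label has multiplicity 1 on its level; unique nodes labelled u get one child
  per neighbour of u.\<close>
fun ut_level :: "'a set \<Rightarrow> ('a \<Rightarrow> 'a \<Rightarrow> bool) \<Rightarrow> 'a \<Rightarrow> nat \<Rightarrow> 'a multiset" where
  "ut_level V E v 0 = {#v#}"
| "ut_level V E v (Suc k) =
     (\<Sum>u \<in> {u. count (ut_level V E v k) u = 1}. mset_set {w \<in> V. E u w})"

definition has_unique :: "'a multiset \<Rightarrow> bool" where
  "has_unique M \<longleftrightarrow> (\<exists>u. count M u = 1)"

text \<open>Index of the last generated level: generation stops at level k when no node
  of level k is unique or k has reached n.\<close>
definition ut_stop :: "'a set \<Rightarrow> ('a \<Rightarrow> 'a \<Rightarrow> bool) \<Rightarrow> 'a \<Rightarrow> nat" where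
  "ut_stop V E v = (LEAST k. card V \<le> k \<or> \<not> has_unique (ut_level V E v k))"

definition ut_height :: "'a set \<Rightarrow> ('a \<Rightarrow> 'a \<Rightarrow> bool) \<Rightarrow> 'a \<Rightarrow> nat" where
  "ut_height V E v = (if ut_level V E v (ut_stop V E v) = {#} then ut_stop V E v - 1
                      else ut_stop V E v)"

definition ut_size :: "'a set \<Rightarrow> ('a \<Rightarrow> 'a \<Rightarrow> bool) \<Rightarrow> 'a \<Rightarrow> nat \<Rightarrow> nat" where
  "ut_size V E v k = size (ut_level V E v k)"

text \<open>Number of nodes on level k having exactly i children (used for i \<ge> 1).
  Nodes on the last generated level, and non-unique nodes, are leaves.\<close>
definition ut_children :: "'a set \<Rightarrow> ('a \<Rightarrow> 'a \<Rightarrow> bool) \<Rightarrow> 'a \<Rightarrow> nat \<Rightarrow> nat \<Rightarrow> nat" where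
  "ut_children V E v k i =
     (if k < ut_stop V E v
      then card {u. count (ut_level V E v k) u = 1 \<and> card {w \<in> V. E u w} = i}
      else 0)"

definition ut_equiv :: "nat \<Rightarrow> 'a set \<Rightarrow> ('a \<Rightarrow> 'a \<Rightarrow> bool) \<Rightarrow> 'b set \<Rightarrow> ('b \<Rightarrow> 'b \<Rightarrow> bool)
     \<Rightarrow> 'a \<Rightarrow> 'b \<Rightarrow> bool" where
  "ut_equiv n V E U F v u \<longleftrightarrow>
     ut_height V E v = ut_height U F u
     \<and> (\<forall>k \<le> ut_height V E v. ut_size V E v k = ut_size U F u k)
     \<and> (\<forall>k \<le> ut_height V E v. \<forall>i \<in> {1..n-1}. ut_children V E v k i = ut_children U F u k i)"

definition ut_compare :: "('a \<Rightarrow> 'b \<Rightarrow> bool) \<Rightarrow> 'a list \<Rightarrow> 'b list \<Rightarrow> 'a set \<times> 'b set" where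
  "ut_compare eq vs us =
     foldl (\<lambda>(MV, MU) v. if v \<in> MV then (MV, MU) else
              (case find (\<lambda>u. u \<notin> MU \<and> eq v u) us of
                 None \<Rightarrow> (MV, MU)
               | Some u \<Rightarrow> (insert v MV, insert u MU))) ({}, {}) vs"

definition ut_outputs_iso :: "'a set \<Rightarrow> ('a \<Rightarrow> 'a \<Rightarrow> bool) \<Rightarrow> 'b set \<Rightarrow> ('b \<Rightarrow> 'b \<Rightarrow> bool)
     \<Rightarrow> 'a list \<Rightarrow> 'b list \<Rightarrow> bool" where
  "ut_outputs_iso V E U F vs us \<longleftrightarrow>
     ut_compare (ut_equiv (card V) V E U F) vs us = (V, U)"

end

theory Submission
  imports Defs
begin

text \<open>An isomorphism f carries every level of T(v) onto the corresponding level of T(f v),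
  so corresponding vertices have trees with identical invariants.  The comparison stage only
  ever matches vertices with equal invariants; since f preserves them, each invariant class
  has the same size in G and in H, so the greedy matching always finds an unmapped partner.\<close>

lemma count_eq_oneD: "count M x = 1 \<Longrightarrow> x \<in># M"
  by (metis not_in_iff zero_neq_one)

lemma count_eq_one_subset: "{x. count M x = 1} \<subseteq> set_mset M"
  by (auto intro: count_eq_oneD)

lemma count_image_mset_inj_on:
  assumes "inj_on f A" "set_mset M \<subseteq> A" "x \<in> A"
  shows "count (image_mset f M) (f x) = count M x"
proof -
  have "f -` {f x} \<inter> set_mset M = {x} \<inter> set_mset M"
    using assms by (auto simp: inj_on_def)
  then show ?thesis
    by (cases "x \<in># M") (simp_all add: count_image_mset not_in_iff)
qed

lemma singletons_image_mset_inj_on: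
  assumes "inj_on f A" "set_mset M \<subseteq> A"
  shows "{y. count (image_mset f M) y = 1 \<and> P y} = f ` {x. count M x = 1 \<and> P (f x)}"
proof -
  have in_A: "x \<in> A" if "x \<in># M" for x
    using assms(2) that by blast
  have "count (image_mset f M) y = 1 \<and> P y \<longleftrightarrow> (\<exists>x. count M x = 1 \<and> P (f x) \<and> y = f x)" for y
  proof
    assume y: "count (image_mset f M) y = 1 \<and> P y"
    then have "y \<in># image_mset f M" by (intro count_eq_oneD) simp
    then obtain x where "x \<in># M" "y = f x" by auto
    then show "\<exists>x. count M x = 1 \<and> P (f x) \<and> y = f x"
      using y count_image_mset_inj_on[OF assms in_A] by auto
  next
    assume "\<exists>x. count M x = 1 \<and> P (f x) \<and> y = f x"
    then obtain x where x: "count M x = 1" "P (f x)" "y = f x" by blast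
    then have "x \<in># M" by (intro count_eq_oneD)
    then show "count (image_mset f M) y = 1 \<and> P y"
      using x count_image_mset_inj_on[OF assms in_A] by auto
  qed
  then show ?thesis by blast
qed

lemma image_mset_sum: "image_mset f (sum g S) = (\<Sum>x\<in>S. image_mset f (g x))"
  by (induction S rule: infinite_finite_induct) auto

lemma ut_level_subset:
  assumes "v \<in> V"
  shows "set_mset (ut_level V E v k) \<subseteq> V"
proof (induction k)
  case (Suc k)
  have "finite {u. count (ut_level V E v k) u = 1}"
    using count_eq_one_subset finite_set_mset by (rule finite_subset)
  moreover have "set_mset (mset_set {w \<in> V. E u w}) \<subseteq> V" for u
    by (cases "finite {w \<in> V. E u w}") auto
  ultimately show ?case
    by (auto simp: set_mset_sum)
qed (use assms in simp)

lemma ut_level_count_eq_oneD: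
  "v \<in> V \<Longrightarrow> count (ut_level V E v k) x = 1 \<Longrightarrow> x \<in> V"
  by (meson count_eq_oneD subsetD ut_level_subset)

text \<open>The data compared by \<open>ut_equiv\<close>, packed into one value, so that equivalence
  of trees becomes equality of keys.\<close>
definition ut_invariants :: "nat \<Rightarrow> 'a set \<Rightarrow> ('a \<Rightarrow> 'a \<Rightarrow> bool) \<Rightarrow> 'a \<Rightarrow> nat \<times> nat list \<times> nat list list"
  where "ut_invariants n V E v =
    (ut_height V E v,
     map (ut_size V E v) [0..<Suc (ut_height V E v)],
     map (\<lambda>k. map (ut_children V E v k) [1..<n]) [0..<Suc (ut_height V E v)])"

lemma ut_equiv_iff_invariants_eq:
  "ut_equiv n V E U F v u \<longleftrightarrow> ut_invariants n V E v = ut_invariants n U F u"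
proof -
  have "set [1..<n] = {1..n-1}"
    by (cases n) auto
  then show ?thesis
    unfolding ut_equiv_def ut_invariants_def
    by (auto simp: map_eq_conv less_Suc_eq_le simp del: upt_Suc)
qed

lemma card_fibres_bij_betw:
  assumes "bij_betw f A B" "\<And>x. x \<in> A \<Longrightarrow> h (f x) = g x"
  shows "card {x \<in> A. g x = s} = card {y \<in> B. h y = s}"
proof -
  have "f ` {x \<in> A. g x = s} = {y \<in> B. h y = s}"
    using assms by (auto simp: bij_betw_def)
  moreover have "inj_on f {x \<in> A. g x = s}"
    using bij_betw_imp_inj_on[OF assms(1)] by (rule inj_on_subset) blast
  ultimately show ?thesis
    using card_image by fastforce
qed

lemma ut_compare_snoc:
  "ut_compare eq (xs @ [v]) us =
    (case ut_compare eq xs us of (MV, MU) \<Rightarrow>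
      if v \<in> MV then (MV, MU) else
        (case find (\<lambda>u. u \<notin> MU \<and> eq v u) us of
           None \<Rightarrow> (MV, MU)
         | Some u \<Rightarrow> (insert v MV, insert u MU)))"
  by (simp add: ut_compare_def split: prod.split)

lemma unmatched_partner_exists:
  assumes "finite V" "finite U" "MV \<subseteq> V" "MU \<subseteq> U" "v \<in> V - MV"
    and "card {x \<in> V. g x = g v} = card {u \<in> U. h u = g v}"
    and "card {x \<in> MV. g x = g v} = card {u \<in> MU. h u = g v}"
  shows "\<exists>u \<in> U - MU. h u = g v"
proof (rule ccontr)
  assume "\<not> ?thesis"
  then have "{u \<in> U. h u = g v} \<subseteq> {u \<in> MU. h u = g v}"
    by blast
  then have "card {x \<in> V. g x = g v} \<le> card {x \<in> MV. g x = g v}"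
    using assms by (simp add: card_mono finite_subset)
  moreover have "card {x \<in> MV. g x = g v} < card {x \<in> V. g x = g v}"
    using assms(1,3,5) by (intro psubset_card_mono) auto
  ultimately show False
    by linarith
qed

lemma ut_compare_key_invariant:
  assumes "distinct xs" "set xs \<subseteq> V" "finite V" "set us = U"
    and classes: "\<And>s. card {x \<in> V. g x = s} = card {u \<in> U. h u = s}"
  shows "\<exists>MU. ut_compare (\<lambda>v u. g v = h u) xs us = (set xs, MU) \<and> MU \<subseteq> U
    \<and> (\<forall>s. card {x \<in> set xs. g x = s} = card {u \<in> MU. h u = s})"
  using assms(1,2)
proof (induction xs rule: rev_induct)
  case Nil
  then show ?case by (simp add: ut_compare_def)
next
  case (snoc v xs)
  then obtain MU where MU: "ut_compare (\<lambda>v u. g v = h u) xs us = (set xs, MU)" "MU \<subseteq> U"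
    and counts: "\<And>s. card {x \<in> set xs. g x = s} = card {u \<in> MU. h u = s}"
    by auto
  have fin: "finite U" "finite MU"
    using assms(4) MU(2) finite_subset by auto
  have "v \<in> V - set xs" "set xs \<subseteq> V"
    using snoc.prems by auto
  then have "\<exists>u \<in> U - MU. h u = g v"
    using unmatched_partner_exists[OF assms(3) fin(1) _ MU(2)] classes counts by blast
  then have "find (\<lambda>u. u \<notin> MU \<and> g v = h u) us \<noteq> None"
    using assms(4) by (auto simp: find_None_iff)
  then obtain u where u: "find (\<lambda>u. u \<notin> MU \<and> g v = h u) us = Some u"
    by blast
  then have u_new: "u \<in> U" "u \<notin> MU" "h u = g v"
    using assms(4) by (auto simp: find_Some_iff)
  have step: "ut_compare (\<lambda>v u. g v = h u) (xs @ [v]) us = (set (xs @ [v]), insert u MU)"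
    using MU(1) u snoc.prems(1) by (simp add: ut_compare_snoc)
  have "card {x \<in> set (xs @ [v]). g x = s} = card {w \<in> insert u MU. h w = s}" for s
  proof (cases "s = g v")
    case True
    then have "{x \<in> set (xs @ [v]). g x = s} = insert v {x \<in> set xs. g x = s}"
      and "{w \<in> insert u MU. h w = s} = insert u {w \<in> MU. h w = s}"
      using u_new by auto
    then show ?thesis
      using snoc.prems u_new fin counts by simp
  next
    case False
    then have "{x \<in> set (xs @ [v]). g x = s} = {x \<in> set xs. g x = s}"
      and "{w \<in> insert u MU. h w = s} = {w \<in> MU. h w = s}"
      using u_new by auto
    then show ?thesis
      using counts by simp
  qed
  then show ?case
    using step MU(2) u_new(1) by blast
qed

lemma ut_compare_key_matching:
  assumes "distinct vs" "set vs = V" "set us = U"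
    and classes: "\<And>s. card {x \<in> V. g x = s} = card {u \<in> U. h u = s}"
  shows "ut_compare (\<lambda>v u. g v = h u) vs us = (V, U)"
proof -
  obtain MU where MU: "ut_compare (\<lambda>v u. g v = h u) vs us = (V, MU)" "MU \<subseteq> U"
    and counts: "\<And>s. card {x \<in> V. g x = s} = card {u \<in> MU. h u = s}"
    using ut_compare_key_invariant[OF assms(1) _ _ assms(3) classes] assms(2) by auto
  have "u \<in> MU" if "u \<in> U" for u
  proof -
    have "{w \<in> MU. h w = h u} = {w \<in> U. h w = h u}"
      using MU(2) counts[of "h u"] classes[of "h u"] assms(3)
      by (intro card_subset_eq) auto
    then show ?thesis
      using that by blast
  qed
  then show ?thesis
    using MU by auto
qed

locale graph_isomorphism =
  fixes V :: "'a set" and E :: "'a \<Rightarrow> 'a \<Rightarrow> bool"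
    and U :: "'b set" and F :: "'b \<Rightarrow> 'b \<Rightarrow> bool"
    and f :: "'a \<Rightarrow> 'b"
  assumes bij: "bij_betw f V U"
    and adj_iff: "\<And>u w. u \<in> V \<Longrightarrow> w \<in> V \<Longrightarrow> F (f u) (f w) \<longleftrightarrow> E u w"
begin

lemma inj: "inj_on f V"
  using bij by (rule bij_betw_imp_inj_on)

lemma neighbours_image: "x \<in> V \<Longrightarrow> {w \<in> U. F (f x) w} = f ` {w \<in> V. E x w}"
  using bij adj_iff by (auto simp: bij_betw_def)

lemma mset_neighbours_image:
  "x \<in> V \<Longrightarrow> mset_set {w \<in> U. F (f x) w} = image_mset f (mset_set {w \<in> V. E x w})"
  by (simp add: neighbours_image image_mset_mset_set inj_on_subset[OF inj])

lemma card_neighbours_image: "x \<in> V \<Longrightarrow> card {w \<in> U. F (f x) w} = card {w \<in> V. E x w}"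
  by (simp add: neighbours_image card_image inj_on_subset[OF inj])

lemma ut_level_image:
  assumes "v \<in> V"
  shows "ut_level U F (f v) k = image_mset f (ut_level V E v k)"
proof (induction k)
  case (Suc k)
  define S where "S = {x. count (ut_level V E v k) x = 1}"
  have S_V: "S \<subseteq> V"
    using ut_level_count_eq_oneD[OF assms] by (auto simp: S_def)
  have "ut_level U F (f v) (Suc k) = (\<Sum>y \<in> f ` S. mset_set {w \<in> U. F y w})"
    using singletons_image_mset_inj_on[OF inj ut_level_subset[OF assms], where P = "\<lambda>_. True"]
    by (simp add: Suc S_def)
  also have "\<dots> = (\<Sum>x \<in> S. image_mset f (mset_set {w \<in> V. E x w}))"
    using S_V by (simp add: sum.reindex inj_on_subset[OF inj] mset_neighbours_image subset_iff)
  also have "\<dots> = image_mset f (ut_level V E v (Suc k))"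
    by (simp add: S_def image_mset_sum)
  finally show ?case .
qed simp

lemma ut_stop_image:
  assumes "v \<in> V"
  shows "ut_stop U F (f v) = ut_stop V E v"
proof -
  have "{y. count (ut_level U F (f v) k) y = 1} = f ` {x. count (ut_level V E v k) x = 1}" for k
    using singletons_image_mset_inj_on[OF inj ut_level_subset[OF assms], where P = "\<lambda>_. True"]
    by (simp add: ut_level_image[OF assms])
  then have "has_unique (ut_level U F (f v) k) \<longleftrightarrow> has_unique (ut_level V E v k)" for k
    unfolding has_unique_def by (metis (mono_tags) empty_Collect_eq image_is_empty)
  moreover have "card U = card V"
    using bij by (simp add: bij_betw_same_card)
  ultimately show ?thesis
    by (simp add: ut_stop_def)
qed

lemma ut_height_image: "v \<in> V \<Longrightarrow> ut_height U F (f v) = ut_height V E v"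
  by (simp add: ut_height_def ut_stop_image ut_level_image)

lemma ut_size_image: "v \<in> V \<Longrightarrow> ut_size U F (f v) k = ut_size V E v k"
  by (simp add: ut_size_def ut_level_image)

lemma ut_children_image:
  assumes "v \<in> V"
  shows "ut_children U F (f v) k i = ut_children V E v k i"
proof -
  define S where "S = {x. count (ut_level V E v k) x = 1 \<and> card {w \<in> U. F (f x) w} = i}"
  have S_V: "S \<subseteq> V"
    using ut_level_count_eq_oneD[OF assms] by (auto simp: S_def)
  have "{y. count (ut_level U F (f v) k) y = 1 \<and> card {w \<in> U. F y w} = i} = f ` S"
    unfolding S_def ut_level_image[OF assms]
    by (rule singletons_image_mset_inj_on[OF inj ut_level_subset[OF assms]])
  then have "card {y. count (ut_level U F (f v) k) y = 1 \<and> card {w \<in> U. F y w} = i} = card S"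
    by (simp add: card_image inj_on_subset[OF inj S_V])
  also have "S = {x. count (ut_level V E v k) x = 1 \<and> card {w \<in> V. E x w} = i}"
    using ut_level_count_eq_oneD[OF assms] by (auto simp: S_def card_neighbours_image)
  finally show ?thesis
    by (simp add: ut_children_def ut_stop_image[OF assms])
qed

lemma ut_invariants_image: "v \<in> V \<Longrightarrow> ut_invariants n U F (f v) = ut_invariants n V E v"
  by (simp add: ut_invariants_def ut_height_image ut_size_image ut_children_image)

end

theorem theorem2:
  fixes V :: "'a set" and E :: "'a \<Rightarrow> 'a \<Rightarrow> bool"
    and U :: "'b set" and F :: "'b \<Rightarrow> 'b \<Rightarrow> bool"
    and vs :: "'a list" and us :: "'b list"
  assumes "simple_graph V E" and "simple_graph U F"
    and "graph_iso V E U F"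
    and "distinct vs" and "set vs = V"
    and "distinct us" and "set us = U"
  shows "ut_outputs_iso V E U F vs us"
proof -
  obtain f where "bij_betw f V U" "\<forall>u\<in>V. \<forall>w\<in>V. F (f u) (f w) \<longleftrightarrow> E u w"
    using assms(3) unfolding graph_iso_def by blast
  then interpret graph_isomorphism V E U F f
    by unfold_locales auto
  let ?key_G = "ut_invariants (card V) V E" and ?key_H = "ut_invariants (card V) U F"
  have equiv: "ut_equiv (card V) V E U F = (\<lambda>v u. ?key_G v = ?key_H u)"
    by (intro ext) (rule ut_equiv_iff_invariants_eq)
  have "card {v \<in> V. ?key_G v = s} = card {u \<in> U. ?key_H u = s}" for s
    by (rule card_fibres_bij_betw[OF bij]) (rule ut_invariants_image)
  then show ?thesis
    unfolding ut_outputs_iso_def equiv by (rule ut_compare_key_matching[OF assms(4,5,7)])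
qed

end
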